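(* Let $\Psi$ be a root system in a real inner product space, with base $\{\gamma_1,\dots,\gamma_m\}$ and positive roots $\Psi^+$, and let $\mathfrak{s}^+=\{H\in\operatorname{span}\Psi:(H,\gamma_i)>0 \text{ for all } i=1,\dots,m\}$. Let $\Psi_1=\operatorname{span}_{\mathbb{Z}}\{\gamma_2,\dots,\gamma_m\}\cap\Psi$, with Weyl group $\mathcal{V}_1$ (generated by the reflections $\sigma_\alpha(v)=v-\frac{2(v,\alpha)}{(\alpha,\alpha)}\alpha$, $\alpha\in\Psi_1$), and let $\mathfrak{c}^+=\{H\in\operatorname{span}\Psi_1:(H,\gamma_i)>0\text{ for } i=2,\dots,m\}$. Let $$R_1=\{H\in\mathfrak{s}^+:\|H\|\ge1,\ (\gamma_1,H)\ge(\gamma_j,H)\text{ for all } j\},$$ and define $P:\operatorname{span}\Psi\to\operatorname{span}\Psi$ by $P(H)=\frac{1}{|\mathcal{V}_1|}\sum_{\sigma\in\mathcal{V}_1}\sigma(H)$. Then: (i) $\sigma(P(H))=P(H)$ for all $\sigma\in\mathcal{V}_1$ and $H\in\operatorname{span}\Psi$; (ii) $P$ is the orthogonal projection from $\operatorname{span}\Psi$ onto $(\operatorname{span}\Psi_1)^\perp$, so $I-P$ is the orthogonal projection from $\operatorname{span}\Psi$ onto $\operatorname{span}\Psi_1$; (iii) $I-P$ maps $\mathfrak{s}^+$ into $\mathfrak{c}^+$; (iv) there are constants $a,b>0$ such that $\|P(H)\|\ge a\|H\|$ and $\|(I-P)H\|\le b\|P(H)\|$ for all $H\in R_1$.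
   Context: In the paper $\Psi$ arises as a simple subroot system of an irreducible root system $\Phi$ with base $\Delta$, i.e. $\Psi=\operatorname{span}_{\mathbb{Z}}\{\gamma_1,\dots,\gamma_m\}\cap\Phi$ for some subset $\{\gamma_1,\dots,\gamma_m\}\subseteq\Delta$, which is then a base of $\Psi$. *)

theory Defs
  imports "HOL-Analysis.Analysis"
begin

definition refl_root :: "'a::real_inner \<Rightarrow> 'a \<Rightarrow> 'a" where
  "refl_root \<alpha> v = v - ((2 * (v \<bullet> \<alpha>)) / (\<alpha> \<bullet> \<alpha>)) *\<^sub>R \<alpha>"

definition root_system :: "'a::real_inner set \<Rightarrow> bool" where
  "root_system \<Psi> \<longleftrightarrow>
     finite \<Psi> \<and> 0 \<notin> \<Psi> \<and>
     (\<forall>\<alpha>\<in>\<Psi>. \<forall>c::real. c *\<^sub>R \<alpha> \<in> \<Psi> \<longrightarrow> c = 1 \<or> c = -1) \<and>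
     (\<forall>\<alpha>\<in>\<Psi>. \<forall>\<beta>\<in>\<Psi>. refl_root \<alpha> \<beta> \<in> \<Psi>) \<and>
     (\<forall>\<alpha>\<in>\<Psi>. \<forall>\<beta>\<in>\<Psi>. 2 * (\<beta> \<bullet> \<alpha>) / (\<alpha> \<bullet> \<alpha>) \<in> \<int>)"

definition is_base :: "'a::real_inner set \<Rightarrow> (nat \<Rightarrow> 'a) \<Rightarrow> nat \<Rightarrow> bool" where
  "is_base \<Psi> \<gamma> m \<longleftrightarrow>
     inj_on \<gamma> {1..m} \<and> \<gamma> ` {1..m} \<subseteq> \<Psi> \<and> independent (\<gamma> ` {1..m}) \<and>
     (\<forall>\<beta>\<in>\<Psi>. \<exists>c::nat \<Rightarrow> int. \<beta> = (\<Sum>i=1..m. of_int (c i) *\<^sub>R \<gamma> i) \<and>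
        ((\<forall>i\<in>{1..m}. c i \<ge> 0) \<or> (\<forall>i\<in>{1..m}. c i \<le> 0)))"

definition int_span :: "(nat \<Rightarrow> 'a::real_vector) \<Rightarrow> nat set \<Rightarrow> 'a set" where
  "int_span \<gamma> I = {(\<Sum>i\<in>I. of_int (c i) *\<^sub>R \<gamma> i) | c :: nat \<Rightarrow> int. True}"

text \<open>Weyl group generated by reflections in roots of S (as maps on the space);
  since reflections are involutions, the generated monoid is the generated group.\<close>
inductive_set weyl_group :: "'a::real_inner set \<Rightarrow> ('a \<Rightarrow> 'a) set" for S where
  weyl_id: "id \<in> weyl_group S"
| weyl_step: "\<alpha> \<in> S \<Longrightarrow> w \<in> weyl_group S \<Longrightarrow> refl_root \<alpha> \<circ> w \<in> weyl_group S"

end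

theory Submission
  imports Defs
begin

text \<open>Averaging over the finite group \<open>V\<^sub>1\<close> gives a \<open>V\<^sub>1\<close>-invariant vector \<open>P H\<close>;
  invariance under the reflection in a root \<open>\<alpha> \<in> \<Psi>\<^sub>1\<close> forces \<open>P H \<bottom> \<alpha>\<close>, while each
  \<open>\<sigma> \<in> V\<^sub>1\<close> moves \<open>H\<close> only inside \<open>span \<Psi>\<^sub>1\<close>. So \<open>P\<close> is the orthogonal projection
  onto \<open>(span \<Psi>\<^sub>1)\<^sup>\<bottom>\<close>, and \<open>H - P H\<close> has the same inner products with
  \<open>\<gamma> 2, \<dots>, \<gamma> m\<close> as \<open>H\<close>. The set \<open>R\<^sub>1\<close> lies in a closed cone on which the linear
  map \<open>P\<close> has trivial kernel, which by compactness of the unit sphere gives the lower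
  bound: if \<open>P H = 0\<close>, then \<open>H\<close> is a combination of \<open>\<gamma> 2, \<dots>, \<gamma> m\<close>, and as distinct simple
  roots are pairwise obtuse, \<open>(H, \<gamma> j) \<ge> 0\<close> and \<open>(\<gamma> 1, H) \<ge> (\<gamma> j, H)\<close> force
  \<open>(H, H) \<le> 0\<close>. The upper bound follows from \<open>norm (H - P H) \<le> norm H\<close>.\<close>

lemma linear_refl_root: "linear (refl_root \<alpha>)"
  unfolding refl_root_def
  by (rule linearI) (simp_all add: add_divide_distrib algebra_simps)

lemma refl_root_refl_root [simp]: "refl_root \<alpha> (refl_root \<alpha> v) = v"
proof (cases "\<alpha> = 0")
  case True
  then show ?thesis by (simp add: refl_root_def)
next
  case False
  then have "\<alpha> \<bullet> \<alpha> \<noteq> 0" by simp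
  then show ?thesis by (simp add: refl_root_def algebra_simps)
qed

lemma refl_root_orthogonal: "z \<bullet> \<alpha> = 0 \<Longrightarrow> refl_root \<alpha> z = z"
  by (simp add: refl_root_def)

lemma linear_weyl_group: "w \<in> weyl_group S \<Longrightarrow> linear w"
proof (induction rule: weyl_group.induct)
  case weyl_id
  then show ?case by (simp add: linear_id[unfolded id_def])
next
  case (weyl_step \<alpha> w)
  then show ?case using linear_compose[OF _ linear_refl_root] by blast
qed

lemma inj_weyl_group: "w \<in> weyl_group S \<Longrightarrow> inj w"
proof (induction rule: weyl_group.induct)
  case weyl_id
  then show ?case by simp
next
  case (weyl_step \<alpha> w)
  have "inj (refl_root \<alpha>)" by (metis injI refl_root_refl_root)
  with weyl_step show ?case using inj_compose by blast
qed

lemma weyl_group_comp: "\<sigma> \<in> weyl_group S \<Longrightarrow> w \<in> weyl_group S \<Longrightarrow> \<sigma> \<circ> w \<in> weyl_group S"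
  by (induction rule: weyl_group.induct) (auto simp: comp_assoc intro: weyl_group.weyl_step)

lemma refl_root_in_weyl_group: "\<alpha> \<in> S \<Longrightarrow> refl_root \<alpha> \<in> weyl_group S"
  using weyl_group.weyl_step[OF _ weyl_group.weyl_id] by fastforce

lemma weyl_group_diff_in_span: "w \<in> weyl_group S \<Longrightarrow> w x - x \<in> span S"
proof (induction rule: weyl_group.induct)
  case weyl_id
  then show ?case by (simp add: span_zero)
next
  case (weyl_step \<alpha> w)
  have "(refl_root \<alpha> \<circ> w) x - x = (w x - x) - ((2 * (w x \<bullet> \<alpha>)) / (\<alpha> \<bullet> \<alpha>)) *\<^sub>R \<alpha>"
    by (simp add: refl_root_def)
  with weyl_step show ?case by (metis span_base span_diff span_scale)
qed

lemma weyl_group_fixes_orthogonal: "w \<in> weyl_group S \<Longrightarrow> (\<And>\<alpha>. \<alpha> \<in> S \<Longrightarrow> z \<bullet> \<alpha> = 0) \<Longrightarrow> w z = z"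
  by (induction rule: weyl_group.induct) (auto simp: refl_root_orthogonal)

lemma weyl_group_preserves:
  assumes "w \<in> weyl_group S" "\<And>\<alpha> \<beta>. \<alpha> \<in> S \<Longrightarrow> \<beta> \<in> S \<Longrightarrow> refl_root \<alpha> \<beta> \<in> S" "\<beta> \<in> S"
  shows "w \<beta> \<in> S"
  using assms by (induction arbitrary: \<beta> rule: weyl_group.induct) auto

text \<open>An element of the Weyl group is linear and fixes the orthogonal complement of
  \<open>span S\<close>, so it is determined by its permutation of the finite set \<open>S\<close>.\<close>

lemma finite_weyl_group:
  fixes S :: "'a::euclidean_space set"
  assumes "finite S" "\<And>\<alpha> \<beta>. \<alpha> \<in> S \<Longrightarrow> \<beta> \<in> S \<Longrightarrow> refl_root \<alpha> \<beta> \<in> S"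
  shows "finite (weyl_group S)"
proof -
  have "inj_on (\<lambda>w. restrict w S) (weyl_group S)"
  proof (rule inj_onI, rule ext)
    fix w1 w2 x
    assume w: "w1 \<in> weyl_group S" "w2 \<in> weyl_group S" and eq: "restrict w1 S = restrict w2 S"
    obtain y z where y: "y \<in> span S" and z: "\<And>u. u \<in> span S \<Longrightarrow> orthogonal z u" and x: "x = y + z"
      using orthogonal_subspace_decomp_exists[of S x] by metis
    have "w1 y = w2 y"
      by (rule linear_eq_on_span[OF linear_weyl_group[OF w(1)] linear_weyl_group[OF w(2)] _ y])
        (metis eq restrict_apply')
    moreover have "w1 z = z" "w2 z = z"
      using z span_base w by (auto simp: orthogonal_def intro: weyl_group_fixes_orthogonal)
    ultimately show "w1 x = w2 x"
      using x linear_add[OF linear_weyl_group[OF w(1)]] linear_add[OF linear_weyl_group[OF w(2)]] by simp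
  qed
  moreover have "(\<lambda>w. restrict w S) ` weyl_group S \<subseteq> S \<rightarrow>\<^sub>E S"
    using weyl_group_preserves[OF _ assms(2)] by auto
  moreover have "finite (S \<rightarrow>\<^sub>E S)"
    using assms(1) by (simp add: finite_PiE)
  ultimately show ?thesis
    by (meson finite_imageD finite_subset)
qed

definition weyl_average :: "'a::real_inner set \<Rightarrow> 'a \<Rightarrow> 'a" where
  "weyl_average S H = (1 / real (card (weyl_group S))) *\<^sub>R (\<Sum>\<sigma>\<in>weyl_group S. \<sigma> H)"

lemma linear_weyl_average: "linear (weyl_average S)"
proof -
  have "linear (\<lambda>H. \<Sum>\<sigma>\<in>weyl_group S. \<sigma> H)"
    by (rule linear_compose_sum) (auto intro: linear_weyl_group)
  then show ?thesis
    unfolding weyl_average_def by (rule linear_compose_scale_right)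
qed

lemma weyl_average_invariant:
  assumes "finite (weyl_group S)" "\<sigma> \<in> weyl_group S"
  shows "\<sigma> (weyl_average S H) = weyl_average S H"
proof -
  have inj: "inj_on ((\<circ>) \<sigma>) (weyl_group S)"
    using inj_weyl_group[OF assms(2)] by (auto intro!: inj_onI simp: fun_eq_iff inj_eq)
  have "\<sigma> (\<Sum>w\<in>weyl_group S. w H) = (\<Sum>w\<in>weyl_group S. \<sigma> (w H))"
    by (rule linear_sum[OF linear_weyl_group[OF assms(2)]])
  also have "\<dots> = (\<Sum>w\<in>(\<circ>) \<sigma> ` weyl_group S. w H)"
    by (simp add: sum.reindex[OF inj])
  also have "(\<circ>) \<sigma> ` weyl_group S = weyl_group S"
    using assms by (intro endo_inj_surj inj) (auto intro: weyl_group_comp)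
  finally show ?thesis
    unfolding weyl_average_def linear_scale[OF linear_weyl_group[OF assms(2)]] by simp
qed

lemma weyl_average_orthogonal:
  assumes "finite (weyl_group S)" "0 \<notin> S" "x \<in> span S"
  shows "orthogonal (weyl_average S H) x"
  using assms(3)
proof (rule orthogonal_to_span)
  fix \<alpha> assume "\<alpha> \<in> S"
  then have "refl_root \<alpha> (weyl_average S H) = weyl_average S H" and "\<alpha> \<noteq> 0"
    using assms(1,2) refl_root_in_weyl_group[of \<alpha> S] weyl_average_invariant by auto
  then show "orthogonal (weyl_average S H) \<alpha>"
    by (simp add: refl_root_def orthogonal_def)
qed

lemma weyl_average_diff_in_span:
  assumes "finite (weyl_group S)"
  shows "H - weyl_average S H \<in> span S"
proof -
  have "card (weyl_group S) > 0"
    using assms weyl_group.weyl_id card_gt_0_iff by blast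
  then have "H - weyl_average S H = (1 / real (card (weyl_group S))) *\<^sub>R (\<Sum>w\<in>weyl_group S. H - w H)"
    by (simp add: weyl_average_def sum_subtractf scaleR_diff_right sum_constant_scaleR)
  moreover have "(\<Sum>w\<in>weyl_group S. H - w H) \<in> span S"
    by (intro span_sum) (metis minus_diff_eq span_neg weyl_group_diff_in_span)
  ultimately show ?thesis by (simp add: span_scale)
qed

lemma weyl_average_in_span:
  assumes "finite (weyl_group S)" "S \<subseteq> T" "H \<in> span T"
  shows "weyl_average S H \<in> span T"
proof -
  have "H - weyl_average S H \<in> span T"
    using weyl_average_diff_in_span[OF assms(1)] span_mono[OF assms(2)] by blast
  from span_diff[OF assms(3) this] show ?thesis by simp
qed

lemma norm_diff_weyl_average_le:
  assumes "finite (weyl_group S)" "0 \<notin> S"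
  shows "norm (H - weyl_average S H) \<le> norm H"
proof -
  have "orthogonal (H - weyl_average S H) (weyl_average S H)"
    using weyl_average_orthogonal[OF assms weyl_average_diff_in_span[OF assms(1)]]
    by (simp add: orthogonal_commute)
  then have "norm H ^ 2 = norm (H - weyl_average S H) ^ 2 + norm (weyl_average S H) ^ 2"
    using norm_add_Pythagorean by fastforce
  then show ?thesis
    by (metis le_add_same_cancel1 norm_ge_zero power2_le_imp_le zero_le_power2)
qed

lemma inner_diff_weyl_average_root:
  assumes "finite (weyl_group S)" "0 \<notin> S" "\<alpha> \<in> S"
  shows "(H - weyl_average S H) \<bullet> \<alpha> = H \<bullet> \<alpha>"
  using weyl_average_orthogonal[OF assms(1,2) span_base[OF assms(3)]]
  by (simp add: orthogonal_def inner_diff_left)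

lemma int_span_refl_root:
  assumes "root_system \<Psi>" "\<alpha> \<in> int_span \<gamma> I \<inter> \<Psi>" "\<beta> \<in> int_span \<gamma> I \<inter> \<Psi>"
  shows "refl_root \<alpha> \<beta> \<in> int_span \<gamma> I \<inter> \<Psi>"
proof -
  obtain a b :: "nat \<Rightarrow> int" where
    a: "\<alpha> = (\<Sum>i\<in>I. of_int (a i) *\<^sub>R \<gamma> i)" and b: "\<beta> = (\<Sum>i\<in>I. of_int (b i) *\<^sub>R \<gamma> i)"
    using assms(2,3) by (auto simp: int_span_def)
  obtain n :: int where n: "2 * (\<beta> \<bullet> \<alpha>) / (\<alpha> \<bullet> \<alpha>) = of_int n"
    using assms unfolding root_system_def by (metis IntD2 Ints_cases)
  have "refl_root \<alpha> \<beta> = \<beta> - of_int n *\<^sub>R \<alpha>"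
    by (simp add: refl_root_def n)
  also have "\<dots> = (\<Sum>i\<in>I. of_int (b i - n * a i) *\<^sub>R \<gamma> i)"
    unfolding a b by (simp add: scaleR_sum_right sum_subtractf[symmetric] scaleR_diff_left)
  finally have "refl_root \<alpha> \<beta> = (\<Sum>i\<in>I. of_int (b i - n * a i) *\<^sub>R \<gamma> i)" .
  then have "refl_root \<alpha> \<beta> \<in> int_span \<gamma> I"
    unfolding int_span_def by (intro CollectI exI[where x="\<lambda>i. b i - n * a i"]) simp
  moreover have "refl_root \<alpha> \<beta> \<in> \<Psi>"
    using assms unfolding root_system_def by blast
  ultimately show ?thesis by blast
qed

lemma finite_weyl_group_int_span:
  fixes \<Psi> :: "'a::euclidean_space set"
  assumes "root_system \<Psi>"
  shows "finite (weyl_group (int_span \<gamma> I \<inter> \<Psi>))"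
  using assms by (intro finite_weyl_group int_span_refl_root) (auto simp: root_system_def)

lemma in_int_span:
  assumes "finite I" "i \<in> I"
  shows "\<gamma> i \<in> int_span \<gamma> I"
proof -
  have "(\<Sum>j\<in>I. of_int (if j = i then 1 else 0) *\<^sub>R \<gamma> j) = \<gamma> i"
    using assms by (simp add: if_distrib[of "\<lambda>c. of_int c *\<^sub>R _"] cong: if_cong)
  then show ?thesis
    unfolding int_span_def by (intro CollectI exI[where x="\<lambda>j. if j = i then 1 else 0"]) simp
qed

lemma int_span_subset_span: "int_span \<gamma> I \<subseteq> span (\<gamma> ` I)"
  unfolding int_span_def by (auto intro!: span_sum span_scale span_base[OF imageI])

lemma base_in_simple_subroot:
  assumes "is_base \<Psi> \<gamma> m" "i \<in> {2..m}"
  shows "\<gamma> i \<in> int_span \<gamma> {2..m} \<inter> \<Psi>"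
  using assms in_int_span[of "{2..m}" i \<gamma>] by (auto simp: is_base_def)

lemma independent_image_coeffs_unique:
  fixes \<gamma> :: "nat \<Rightarrow> 'a::real_vector"
  assumes "inj_on \<gamma> I" "independent (\<gamma> ` I)" "finite I"
    and "(\<Sum>i\<in>I. a i *\<^sub>R \<gamma> i) = (\<Sum>i\<in>I. b i *\<^sub>R \<gamma> i)" "i \<in> I"
  shows "a i = b i"
proof -
  define u where "u v = a (inv_into I \<gamma> v) - b (inv_into I \<gamma> v)" for v
  have "(\<Sum>v\<in>\<gamma> ` I. u v *\<^sub>R v) = (\<Sum>i\<in>I. a i *\<^sub>R \<gamma> i) - (\<Sum>i\<in>I. b i *\<^sub>R \<gamma> i)"
    using assms(1) by (simp add: sum.reindex u_def scaleR_diff_left sum_subtractf)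
  then have "u (\<gamma> i) = 0"
    using independentD[OF assms(2) finite_imageI[OF assms(3)] order_refl, of u] assms(4,5) by simp
  then show ?thesis using assms(1,5) by (simp add: u_def)
qed

text \<open>If \<open>\<gamma> i \<bullet> \<gamma> j > 0\<close>, the reflection of \<open>\<gamma> j\<close> in \<open>\<gamma> i\<close> is the root \<open>\<gamma> j - k \<gamma> i\<close>
  with \<open>k > 0\<close>, whose coefficients have mixed signs.\<close>

lemma base_pairwise_obtuse:
  assumes "root_system \<Psi>" "is_base \<Psi> \<gamma> m" "i \<in> {1..m}" "j \<in> {1..m}" "i \<noteq> j"
  shows "\<gamma> i \<bullet> \<gamma> j \<le> 0"
proof (rule ccontr)
  assume "\<not> ?thesis"
  then have acute: "\<gamma> i \<bullet> \<gamma> j > 0" by simp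
  have roots: "\<gamma> i \<in> \<Psi>" "\<gamma> j \<in> \<Psi>"
    using assms(2-4) unfolding is_base_def by auto
  have "\<gamma> i \<noteq> 0"
    using assms(1) roots unfolding root_system_def by auto
  have "2 * (\<gamma> j \<bullet> \<gamma> i) / (\<gamma> i \<bullet> \<gamma> i) \<in> \<int>"
    using assms(1) roots unfolding root_system_def by blast
  then obtain k :: int where k: "2 * (\<gamma> j \<bullet> \<gamma> i) / (\<gamma> i \<bullet> \<gamma> i) = of_int k"
    by (elim Ints_cases)
  have "2 * (\<gamma> j \<bullet> \<gamma> i) / (\<gamma> i \<bullet> \<gamma> i) > 0"
    using acute \<open>\<gamma> i \<noteq> 0\<close> by (simp add: inner_commute)
  then have "k > 0" using k by simp
  have "refl_root (\<gamma> i) (\<gamma> j) \<in> \<Psi>"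
    using assms(1) roots unfolding root_system_def by blast
  then obtain c :: "nat \<Rightarrow> int" where c: "refl_root (\<gamma> i) (\<gamma> j) = (\<Sum>l=1..m. of_int (c l) *\<^sub>R \<gamma> l)"
    and sign: "(\<forall>l\<in>{1..m}. c l \<ge> 0) \<or> (\<forall>l\<in>{1..m}. c l \<le> 0)"
    using assms(2) unfolding is_base_def by blast
  define d :: "nat \<Rightarrow> real" where "d l = (if l = j then 1 else 0) - (if l = i then of_int k else 0)" for l
  have "(\<Sum>l=1..m. d l *\<^sub>R \<gamma> l) = \<gamma> j - of_int k *\<^sub>R \<gamma> i"
    using assms(3,4) by (simp add: d_def scaleR_diff_left sum_subtractf if_distrib[of "\<lambda>c. c *\<^sub>R _"] cong: if_cong)
  also have "\<dots> = (\<Sum>l=1..m. of_int (c l) *\<^sub>R \<gamma> l)"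
    using c by (simp add: refl_root_def k)
  finally have "d l = of_int (c l)" if "l \<in> {1..m}" for l
    using assms(2) that unfolding is_base_def by (intro independent_image_coeffs_unique) auto
  from this[of j] this[of i] have "c j = 1" "c i = - k"
    using assms(3-5) by (simp_all add: d_def)
  then show False using sign \<open>k > 0\<close> assms(3,4) by force
qed

text \<open>For a pairwise obtuse family the dual cone lies in the cone: writing \<open>H = H\<^sub>+ - H\<^sub>-\<close>,
  one gets \<open>H\<^sub>- \<bullet> H\<^sub>- = H\<^sub>- \<bullet> H\<^sub>+ - H\<^sub>- \<bullet> H \<le> 0\<close>.\<close>

lemma obtuse_combination_positive_part:
  fixes g :: "nat \<Rightarrow> 'a::real_inner"
  assumes obtuse: "\<And>i j. i \<in> J \<Longrightarrow> j \<in> J \<Longrightarrow> i \<noteq> j \<Longrightarrow> g i \<bullet> g j \<le> 0"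
    and dual: "\<And>j. j \<in> J \<Longrightarrow> H \<bullet> g j \<ge> 0"
    and H: "H = (\<Sum>j\<in>J. c j *\<^sub>R g j)"
  shows "H = (\<Sum>j\<in>J. max (c j) 0 *\<^sub>R g j)"
proof -
  define p where "p j = max (c j) 0" for j
  define q where "q j = max (- c j) 0" for j
  define Hp where "Hp = (\<Sum>j\<in>J. p j *\<^sub>R g j)"
  define Hq where "Hq = (\<Sum>j\<in>J. q j *\<^sub>R g j)"
  have "c j = p j - q j" for j by (simp add: p_def q_def)
  then have H_split: "H = Hp - Hq"
    unfolding H Hp_def Hq_def by (simp add: scaleR_diff_left sum_subtractf)
  have "Hq \<bullet> Hp = (\<Sum>j\<in>J. \<Sum>i\<in>J. q i * p j * (g i \<bullet> g j))"
    unfolding Hp_def Hq_def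
    by (simp add: inner_sum_left inner_sum_right sum_distrib_left mult.assoc mult.left_commute)
  also have "\<dots> \<le> 0"
  proof (intro sum_nonpos)
    fix i j assume "i \<in> J" "j \<in> J"
    then show "q i * p j * (g i \<bullet> g j) \<le> 0"
      using obtuse[of i j] by (cases "i = j") (auto simp: p_def q_def mult_nonneg_nonpos)
  qed
  finally have "Hq \<bullet> Hp \<le> 0" .
  moreover have "H \<bullet> Hq = (\<Sum>j\<in>J. q j * (H \<bullet> g j))"
    unfolding Hq_def by (simp add: inner_sum_right)
  then have "Hq \<bullet> H \<ge> 0"
    using dual by (simp add: q_def sum_nonneg inner_commute)
  moreover have "Hq \<bullet> Hq = Hq \<bullet> Hp - Hq \<bullet> H"
    using H_split by (simp add: inner_diff_right)
  ultimately have "Hq = 0"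
    by (metis diff_le_0_iff_le inner_eq_zero_iff inner_ge_zero order.antisym order.trans)
  then show ?thesis
    using H_split by (simp add: Hp_def p_def)
qed

text \<open>If moreover \<open>g k\<close> is obtuse to the family and \<open>g k \<bullet> H\<close> dominates every \<open>g j \<bullet> H\<close>,
  then \<open>H \<bullet> H = \<Sum> p\<^sub>j (g j \<bullet> H) \<le> (\<Sum> p\<^sub>j) (g k \<bullet> H) \<le> 0\<close>.\<close>

lemma obtuse_combination_dominated_eq_zero:
  fixes g :: "nat \<Rightarrow> 'a::real_inner"
  assumes obtuse: "\<And>i j. i \<in> J \<Longrightarrow> j \<in> J \<Longrightarrow> i \<noteq> j \<Longrightarrow> g i \<bullet> g j \<le> 0"
    and obtuse_k: "\<And>j. j \<in> J \<Longrightarrow> g k \<bullet> g j \<le> 0"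
    and dual: "\<And>j. j \<in> J \<Longrightarrow> H \<bullet> g j \<ge> 0"
    and dominated: "\<And>j. j \<in> J \<Longrightarrow> g j \<bullet> H \<le> g k \<bullet> H"
    and H: "H = (\<Sum>j\<in>J. c j *\<^sub>R g j)"
  shows "H = 0"
proof -
  define p where "p j = max (c j) 0" for j
  have H_pos: "H = (\<Sum>j\<in>J. p j *\<^sub>R g j)"
    unfolding p_def by (rule obtuse_combination_positive_part[OF obtuse dual H])
  have "g k \<bullet> H = (\<Sum>j\<in>J. p j * (g k \<bullet> g j))"
    by (subst H_pos) (simp add: inner_sum_right)
  also have "\<dots> \<le> 0"
    using obtuse_k by (intro sum_nonpos) (simp add: p_def mult_nonneg_nonpos)
  finally have "g k \<bullet> H \<le> 0" .
  have "H \<bullet> H = (\<Sum>j\<in>J. p j * (g j \<bullet> H))"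
    by (subst (1) H_pos) (simp add: inner_sum_left)
  also have "\<dots> \<le> (\<Sum>j\<in>J. p j * (g k \<bullet> H))"
    using dominated by (intro sum_mono mult_left_mono) (auto simp: p_def)
  also have "\<dots> = (\<Sum>j\<in>J. p j) * (g k \<bullet> H)"
    by (simp add: sum_distrib_right)
  also have "\<dots> \<le> 0"
    using \<open>g k \<bullet> H \<le> 0\<close> by (intro mult_nonneg_nonpos sum_nonneg) (auto simp: p_def)
  finally show "H = 0"
    by (metis inner_eq_zero_iff inner_ge_zero order.antisym)
qed

lemma linear_norm_bounded_below_on_cone:
  fixes f :: "'a::euclidean_space \<Rightarrow> 'b::real_normed_vector"
  assumes "linear f" "closed C"
    and cone: "\<And>x t. x \<in> C \<Longrightarrow> t > 0 \<Longrightarrow> t *\<^sub>R x \<in> C"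
    and kernel: "\<And>x. x \<in> C \<Longrightarrow> f x = 0 \<Longrightarrow> x = 0"
  shows "\<exists>a>0. \<forall>x\<in>C. a * norm x \<le> norm (f x)"
proof -
  define K where "K = C \<inter> sphere 0 1"
  have "compact K"
    unfolding K_def using assms(2) by (rule closed_Int_compact[OF _ compact_sphere])
  have "continuous_on K (\<lambda>x. norm (f x))"
    using assms(1) by (intro continuous_on_norm linear_continuous_on) (simp add: linear_conv_bounded_linear)
  obtain a where "a > 0" and a: "\<And>x. x \<in> K \<Longrightarrow> a \<le> norm (f x)"
  proof (cases "K = {}")
    case True
    then show ?thesis using that[of 1] by simp
  next
    case False
    then obtain x where x: "x \<in> K" and min: "\<forall>y\<in>K. norm (f x) \<le> norm (f y)"
      using continuous_attains_inf[OF \<open>compact K\<close> False \<open>continuous_on K _\<close>] by blast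
    then have "f x \<noteq> 0"
      using kernel[of x] by (auto simp: K_def)
    then show ?thesis
      using that[of "norm (f x)"] min by simp
  qed
  have "a * norm x \<le> norm (f x)" if "x \<in> C" for x
  proof (cases "x = 0")
    case False
    then have "(1 / norm x) *\<^sub>R x \<in> K"
      using cone[OF that] by (simp add: K_def)
    then have "a \<le> norm (f ((1 / norm x) *\<^sub>R x))"
      by (rule a)
    also have "\<dots> = norm (f x) / norm x"
      by (simp add: linear_scale[OF assms(1)])
    finally have "a \<le> norm (f x) / norm x" .
    with False show ?thesis by (simp add: pos_le_divide_eq mult.commute)
  qed (simp add: linear_0[OF assms(1)])
  with \<open>a > 0\<close> show ?thesis by blast
qed

lemma weyl_average_simple_subroot_eq_zero:
  fixes \<Psi> :: "'a::euclidean_space set"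
  assumes "root_system \<Psi>" "is_base \<Psi> \<gamma> m"
    and "\<And>i. i \<in> {2..m} \<Longrightarrow> H \<bullet> \<gamma> i \<ge> 0"
    and "\<And>j. j \<in> {2..m} \<Longrightarrow> \<gamma> j \<bullet> H \<le> \<gamma> 1 \<bullet> H"
    and "weyl_average (int_span \<gamma> {2..m} \<inter> \<Psi>) H = 0"
  shows "H = 0"
proof -
  have "finite (weyl_group (int_span \<gamma> {2..m} \<inter> \<Psi>))"
    by (rule finite_weyl_group_int_span[OF assms(1)])
  then have "H \<in> span (int_span \<gamma> {2..m} \<inter> \<Psi>)"
    using weyl_average_diff_in_span[of _ H] assms(5) by fastforce
  then have "H \<in> span (\<gamma> ` {2..m})"
    by (metis inf.coboundedI1 int_span_subset_span span_mono span_span subsetD)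
  then obtain u where "H = (\<Sum>v\<in>\<gamma> ` {2..m}. u v *\<^sub>R v)"
    using span_finite[of "\<gamma> ` {2..m}"] by auto
  moreover have "inj_on \<gamma> {2..m}"
    using assms(2) unfolding is_base_def by (rule inj_on_subset[OF conjunct1]) auto
  ultimately have H: "H = (\<Sum>j\<in>{2..m}. u (\<gamma> j) *\<^sub>R \<gamma> j)"
    by (simp add: sum.reindex)
  show ?thesis
  proof (rule obtuse_combination_dominated_eq_zero[OF _ _ assms(3,4) H])
    show "\<gamma> i \<bullet> \<gamma> j \<le> 0" if "i \<in> {2..m}" "j \<in> {2..m}" "i \<noteq> j" for i j
      using base_pairwise_obtuse[OF assms(1,2)] that by simp
    show "\<gamma> 1 \<bullet> \<gamma> j \<le> 0" if "j \<in> {2..m}" for j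
      using base_pairwise_obtuse[OF assms(1,2)] that by simp
  qed
qed

lemma weyl_average_simple_subroot_bounds:
  fixes \<Psi> :: "'a::euclidean_space set"
  assumes "root_system \<Psi>" "is_base \<Psi> \<gamma> m"
  defines "P \<equiv> weyl_average (int_span \<gamma> {2..m} \<inter> \<Psi>)"
  shows "\<exists>a>0. \<exists>b>0. \<forall>H. (\<forall>j\<in>{1..m}. 0 \<le> H \<bullet> \<gamma> j \<and> \<gamma> j \<bullet> H \<le> \<gamma> 1 \<bullet> H)
           \<longrightarrow> a * norm H \<le> norm (P H) \<and> norm (H - P H) \<le> b * norm (P H)"
proof -
  define C where "C = (\<Inter>j\<in>{1..m}. {H. 0 \<le> \<gamma> j \<bullet> H} \<inter> {H. 0 \<le> (\<gamma> 1 - \<gamma> j) \<bullet> H})"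
  have C_iff: "H \<in> C \<longleftrightarrow> (\<forall>j\<in>{1..m}. 0 \<le> H \<bullet> \<gamma> j \<and> \<gamma> j \<bullet> H \<le> \<gamma> 1 \<bullet> H)" for H
    by (auto simp: C_def inner_commute inner_diff_right)
  have "closed C"
    unfolding C_def by (intro closed_INT closed_Int closed_halfspace_ge ballI)
  moreover have "t *\<^sub>R H \<in> C" if "H \<in> C" "t > 0" for H t
    using that by (simp add: C_iff)
  moreover have "H = 0" if "H \<in> C" "P H = 0" for H
    using that weyl_average_simple_subroot_eq_zero[OF assms(1,2), of H] by (auto simp: C_iff P_def)
  ultimately obtain a where "a > 0" and a: "\<forall>H\<in>C. a * norm H \<le> norm (P H)"
    using linear_norm_bounded_below_on_cone[of P C] linear_weyl_average unfolding P_def by blast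
  have "norm (H - P H) \<le> 1 / a * norm (P H)" if "H \<in> C" for H
  proof -
    have "0 \<notin> int_span \<gamma> {2..m} \<inter> \<Psi>"
      using assms(1) by (simp add: root_system_def)
    then have "norm (H - P H) \<le> norm H"
      unfolding P_def by (rule norm_diff_weyl_average_le[OF finite_weyl_group_int_span[OF assms(1)]])
    then have "a * norm (H - P H) \<le> a * norm H"
      using \<open>a > 0\<close> by simp
    also have "\<dots> \<le> norm (P H)"
      using a that by blast
    finally show ?thesis
      using \<open>a > 0\<close> by (simp add: field_simps)
  qed
  with a have "\<forall>H\<in>C. a * norm H \<le> norm (P H) \<and> norm (H - P H) \<le> 1 / a * norm (P H)"
    by blast
  moreover have "1 / a > 0"
    using \<open>a > 0\<close> by simp
  ultimately have "\<exists>a>0. \<exists>b>0. \<forall>H\<in>C. a * norm H \<le> norm (P H) \<and> norm (H - P H) \<le> b * norm (P H)"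
    using \<open>a > 0\<close> by blast
  then show ?thesis
    by (simp only: Ball_def C_iff)
qed

theorem lemma1:
  fixes \<Psi> :: "'a::euclidean_space set" and \<gamma> :: "nat \<Rightarrow> 'a" and m :: nat
    and \<Psi>\<^sub>1 :: "'a set" and V\<^sub>1 :: "('a \<Rightarrow> 'a) set"
    and splus cplus R\<^sub>1 :: "'a set" and P :: "'a \<Rightarrow> 'a"
  assumes "root_system \<Psi>"
    and "m \<ge> 1"
    and "is_base \<Psi> \<gamma> m"
    and "splus = {H \<in> span \<Psi>. \<forall>i\<in>{1..m}. H \<bullet> \<gamma> i > 0}"
    and "\<Psi>\<^sub>1 = int_span \<gamma> {2..m} \<inter> \<Psi>"
    and "V\<^sub>1 = weyl_group \<Psi>\<^sub>1"
    and "cplus = {H \<in> span \<Psi>\<^sub>1. \<forall>i\<in>{2..m}. H \<bullet> \<gamma> i > 0}"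
    and "R\<^sub>1 = {H \<in> splus. norm H \<ge> 1 \<and> (\<forall>j\<in>{1..m}. \<gamma> 1 \<bullet> H \<ge> \<gamma> j \<bullet> H)}"
    and "\<And>H. P H = (1 / real (card V\<^sub>1)) *\<^sub>R (\<Sum>\<sigma>\<in>V\<^sub>1. \<sigma> H)"
  shows "(\<forall>\<sigma>\<in>V\<^sub>1. \<forall>H\<in>span \<Psi>. \<sigma> (P H) = P H)
       \<and> (\<forall>H\<in>span \<Psi>. P H \<in> span \<Psi> \<and> (\<forall>x\<in>span \<Psi>\<^sub>1. orthogonal (P H) x)
                        \<and> H - P H \<in> span \<Psi>\<^sub>1)
       \<and> (\<forall>H\<in>span \<Psi>. H - P H \<in> span \<Psi>\<^sub>1
                        \<and> (\<forall>x\<in>span \<Psi>\<^sub>1. orthogonal (H - (H - P H)) x))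
       \<and> (\<forall>H\<in>splus. H - P H \<in> cplus)
       \<and> (\<exists>a>0. \<exists>b>0. \<forall>H\<in>R\<^sub>1. norm (P H) \<ge> a * norm H \<and> norm (H - P H) \<le> b * norm (P H))"
proof -
  have P: "P = weyl_average \<Psi>\<^sub>1"
    using assms(6,9) by (simp add: fun_eq_iff weyl_average_def)
  have fin: "finite (weyl_group \<Psi>\<^sub>1)"
    using finite_weyl_group_int_span[OF assms(1)] assms(5) by simp
  have nonzero: "0 \<notin> \<Psi>\<^sub>1"
    using assms(1,5) by (simp add: root_system_def)
  have diff: "H - P H \<in> span \<Psi>\<^sub>1" for H
    using weyl_average_diff_in_span[OF fin] by (simp add: P)
  have "(H - P H) \<bullet> \<gamma> i = H \<bullet> \<gamma> i" if "i \<in> {2..m}" for H i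
    using inner_diff_weyl_average_root[OF fin nonzero] base_in_simple_subroot[OF assms(3) that]
    by (simp add: P assms(5))
  then have chamber: "H - P H \<in> cplus" if "H \<in> splus" for H
    using that diff assms(4,7) by auto
  have "P = weyl_average (int_span \<gamma> {2..m} \<inter> \<Psi>)"
    by (simp add: P assms(5))
  then obtain a b where "a > 0" "b > 0" and bounds: "\<And>H. (\<forall>j\<in>{1..m}. 0 \<le> H \<bullet> \<gamma> j \<and> \<gamma> j \<bullet> H \<le> \<gamma> 1 \<bullet> H)
      \<Longrightarrow> a * norm H \<le> norm (P H) \<and> norm (H - P H) \<le> b * norm (P H)"
    using weyl_average_simple_subroot_bounds[OF assms(1,3)] by blast
  have "\<forall>j\<in>{1..m}. 0 \<le> H \<bullet> \<gamma> j \<and> \<gamma> j \<bullet> H \<le> \<gamma> 1 \<bullet> H" if "H \<in> R\<^sub>1" for H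
    using that assms(4,8) by (auto simp: less_imp_le)
  with bounds \<open>a > 0\<close> \<open>b > 0\<close>
  have "\<exists>a>0. \<exists>b>0. \<forall>H\<in>R\<^sub>1. norm (P H) \<ge> a * norm H \<and> norm (H - P H) \<le> b * norm (P H)"
    by blast
  moreover have "\<forall>\<sigma>\<in>V\<^sub>1. \<forall>H\<in>span \<Psi>. \<sigma> (P H) = P H"
    using weyl_average_invariant[OF fin] by (simp add: P assms(6))
  moreover have "\<forall>x\<in>span \<Psi>\<^sub>1. orthogonal (P H) x" for H
    using weyl_average_orthogonal[OF fin nonzero] by (simp add: P)
  moreover have "P H \<in> span \<Psi>" if "H \<in> span \<Psi>" for H
    using weyl_average_in_span[OF fin _ that] assms(5) by (simp add: P)
  ultimately show ?thesis
    using diff chamber by simp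
qed

end
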